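(* Let $a_2 = i$, $a_0 = \frac{1-i}{2}$, or $a_2=-i$, $a_0=\frac{1+i}{2}$. Then the second-order recursion $$z_n = \frac{a_2 z_{n-2} + z_{n-1} + a_0}{z_{n-2}},$$ that is, $$z_n = \frac{2i\, z_{n-2} + 2 z_{n-1} + (1-i)}{2 z_{n-2}} \quad\text{or}\quad z_n = \frac{-2i\, z_{n-2} + 2 z_{n-1} + (1+i)}{2 z_{n-2}},$$ is periodic with period $8$: for the sequence defined from indeterminates $z_1,z_2$ one has $z_9 = z_1$ and $z_{10} = z_2$ in $\mathbb{C}(z_1,z_2)$, hence $z_{n+8}=z_n$ for all $n\ge 1$.
   Context: Let $z_1,z_2$ be independent indeterminates over $\mathbb{C}$, and define $z_n \in \mathbb{C}(z_1,z_2)$ for $n\ge 3$ by the given recursion. A second-order recursion is said to be periodic with period $k$ if all iterates $z_3,z_4,\dots$ are well-defined elements of $\mathbb{C}(z_1,z_2)$ (no denominator is identically zero) and $z_{k+1}=z_1$, $z_{k+2}=z_2$; equivalently, every complex sequence satisfying the recursion for which no denominator vanishes satisfies $z_{n+k}=z_n$ for all $n$. *)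

theory Defs
  imports Complex_Main
begin

definition rec_seq :: "complex \<Rightarrow> complex \<Rightarrow> (nat \<Rightarrow> complex) \<Rightarrow> bool" where
  "rec_seq a2 a0 z \<longleftrightarrow>
     (\<forall>n\<ge>1. z n \<noteq> 0 \<and> z (n + 2) = (a2 * z n + z (n + 1) + a0) / z n)"

end

theory Submission
  imports Defs
begin

(* Write s = a2, so that s^2 = -1 and 2 a0 = 1 - s, and run the recursion
   w(k+2) w(k) = s w(k) + w(k+1) + a0 from w0 = x, w1 = y. Clearing denominators gives
     w2 = P2/(2x),  w3 = P3/(2xy),  w4 = P4/(y P2),  w5 = P5/(P2 P3),  w6 = P6/(P3 P4)
   with Pk = orbit_numk, each numerator being the polynomial forced by the recursion once the
   evident common factor is cancelled; this holds for arbitrary s and a0. For the two special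
   parameter pairs three further cancellations occur: P5 divides the next numerator, leaving
   w7 = P7/P4, after which w8 and w9 collapse to x and y. The recursion has solutions at all:
   its fixed points, the roots of c^2 = (1 + s) c + a0, are nonzero. *)

lemma quotient_recursion_step:
  fixes s a A B C N0 D0 N1 D1 N2 D2 G :: "'a::field"
  assumes rec: "C * A = s * A + B + a" and "A \<noteq> 0"
    and A: "A = N0 / D0" and B: "B = N1 / D1"
    and "D0 \<noteq> 0" "D1 \<noteq> 0" "G \<noteq> 0"
    and den: "N0 * D1 = G * D2"
    and num: "s * N0 * D1 + N1 * D0 + a * D0 * D1 = G * N2"
  shows "C = N2 / D2"
proof -
  have "N0 \<noteq> 0" using \<open>A \<noteq> 0\<close> A by simp
  then have "D2 \<noteq> 0" using den \<open>D1 \<noteq> 0\<close> by auto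
  have "C = (s * A + B + a) / A" using rec \<open>A \<noteq> 0\<close> by (simp add: eq_divide_eq)
  also have "\<dots> = (s * N0 * D1 + N1 * D0 + a * D0 * D1) / (N0 * D1)"
    unfolding A B using \<open>N0 \<noteq> 0\<close> \<open>D0 \<noteq> 0\<close> \<open>D1 \<noteq> 0\<close> by (simp add: field_simps)
  also have "\<dots> = N2 / D2"
    using num den \<open>G \<noteq> 0\<close> \<open>D2 \<noteq> 0\<close> by (simp add: field_simps)
  finally show ?thesis .
qed

context
  fixes s a x y :: "'a::field_char_0"
begin

definition orbit_num2 :: 'a where
  "orbit_num2 = 2 * s * x + 2 * y + 2 * a"

definition orbit_num3 :: 'a where
  "orbit_num3 = 2 * s * x * y + orbit_num2 + 2 * a * x"

definition orbit_num4 :: 'a where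
  "orbit_num4 = s * y * orbit_num2 + orbit_num3 + 2 * a * x * y"

definition orbit_num5 :: 'a where
  "orbit_num5 = s * orbit_num2 * orbit_num3 + 2 * x * orbit_num4 + 2 * a * x * y * orbit_num2"

definition orbit_num6 :: 'a where
  "orbit_num6 = s * orbit_num3 * orbit_num4 + y * orbit_num5 + a * y * orbit_num2 * orbit_num3"

definition orbit_num7 :: 'a where
  "orbit_num7 = x + y + 1 - x\<^sup>2 + s * (x\<^sup>2 + 2 * x * y + 2 * x + y)"

lemma orbit_num_closing:
  assumes "s * s = -1" "2 * a = 1 - s"
  shows "s * orbit_num4 * orbit_num5 + orbit_num2 * orbit_num6 + a * orbit_num2 * orbit_num3 * orbit_num4
           = orbit_num5 * orbit_num7"
    and "s * orbit_num6 + orbit_num3 * orbit_num7 + a * orbit_num3 * orbit_num4 = x * orbit_num6"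
    and "s * orbit_num7 + x * orbit_num4 + a * orbit_num4 = y * orbit_num7"
  using assms
  unfolding orbit_num2_def orbit_num3_def orbit_num4_def orbit_num5_def orbit_num6_def
    orbit_num7_def
  by algebra+

lemma product_recursion_closed_forms:
  fixes w :: "nat \<Rightarrow> 'a"
  assumes x: "w 0 = x" and y: "w 1 = y"
    and nz: "\<And>k. k < 5 \<Longrightarrow> w k \<noteq> 0"
    and rec: "\<And>k. k < 5 \<Longrightarrow> w (k + 2) * w k = s * w k + w (k + 1) + a"
  shows "w 2 = orbit_num2 / (2 * x)" and "w 3 = orbit_num3 / (2 * x * y)"
    and "w 4 = orbit_num4 / (y * orbit_num2)" and "w 5 = orbit_num5 / (orbit_num2 * orbit_num3)"
    and "w 6 = orbit_num6 / (orbit_num3 * orbit_num4)"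
proof -
  have r: "w 2 * w 0 = s * w 0 + w 1 + a" "w 3 * w 1 = s * w 1 + w 2 + a"
    "w 4 * w 2 = s * w 2 + w 3 + a" "w 5 * w 3 = s * w 3 + w 4 + a"
    "w 6 * w 4 = s * w 4 + w 5 + a"
    using rec[of 0] rec[of 1] rec[of 2] rec[of 3] rec[of 4] by (simp_all add: eval_nat_numeral)
  have w_nz: "w 0 \<noteq> 0" "w 1 \<noteq> 0" "w 2 \<noteq> 0" "w 3 \<noteq> 0" "w 4 \<noteq> 0"
    by (simp_all add: nz)
  have "x \<noteq> 0" "y \<noteq> 0" using w_nz(1,2) x y by simp_all
  have w0: "w 0 = (2 * x) / 2" and w1: "w 1 = y / 1" using x y by simp_all
  show w2: "w 2 = orbit_num2 / (2 * x)"
    by (rule quotient_recursion_step[OF r(1) w_nz(1) w0 w1, where G = 1])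
      (simp_all add: \<open>x \<noteq> 0\<close> orbit_num2_def algebra_simps)
  then have "orbit_num2 \<noteq> 0" using w_nz(3) by simp
  show w3: "w 3 = orbit_num3 / (2 * x * y)"
    by (rule quotient_recursion_step[OF r(2) w_nz(2) w1 w2, where G = 1])
      (simp_all add: \<open>x \<noteq> 0\<close> orbit_num3_def algebra_simps)
  then have "orbit_num3 \<noteq> 0" using w_nz(4) by simp
  show w4: "w 4 = orbit_num4 / (y * orbit_num2)"
    by (rule quotient_recursion_step[OF r(3) w_nz(3) w2 w3, where G = "2 * x"])
      (simp_all add: \<open>x \<noteq> 0\<close> \<open>y \<noteq> 0\<close> orbit_num4_def algebra_simps)
  show w5: "w 5 = orbit_num5 / (orbit_num2 * orbit_num3)"
    by (rule quotient_recursion_step[OF r(4) w_nz(4) w3 w4, where G = y])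
      (simp_all add: \<open>x \<noteq> 0\<close> \<open>y \<noteq> 0\<close> \<open>orbit_num2 \<noteq> 0\<close> orbit_num5_def algebra_simps)
  show "w 6 = orbit_num6 / (orbit_num3 * orbit_num4)"
    by (rule quotient_recursion_step[OF r(5) w_nz(5) w4 w5, where G = orbit_num2])
      (simp_all add: \<open>y \<noteq> 0\<close> \<open>orbit_num2 \<noteq> 0\<close> \<open>orbit_num3 \<noteq> 0\<close> orbit_num6_def algebra_simps)
qed

lemma product_recursion_period_8:
  fixes w :: "nat \<Rightarrow> 'a"
  assumes s: "s * s = -1" and a: "2 * a = 1 - s"
    and x: "w 0 = x" and y: "w 1 = y"
    and nz: "\<And>k. k < 8 \<Longrightarrow> w k \<noteq> 0"
    and rec: "\<And>k. k < 8 \<Longrightarrow> w (k + 2) * w k = s * w k + w (k + 1) + a"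
  shows "w 8 = x \<and> w 9 = y"
proof -
  have r: "w 7 * w 5 = s * w 5 + w 6 + a" "w 8 * w 6 = s * w 6 + w 7 + a"
    "w 9 * w 7 = s * w 7 + w 8 + a"
    using rec[of 5] rec[of 6] rec[of 7] by (simp_all add: eval_nat_numeral)
  have w_nz: "w 2 \<noteq> 0" "w 3 \<noteq> 0" "w 4 \<noteq> 0" "w 5 \<noteq> 0" "w 6 \<noteq> 0" "w 7 \<noteq> 0"
    by (simp_all add: nz)
  have "\<And>k. k < 5 \<Longrightarrow> w k \<noteq> 0" "\<And>k. k < 5 \<Longrightarrow> w (k + 2) * w k = s * w k + w (k + 1) + a"
    using nz rec by simp_all
  note closed = product_recursion_closed_forms[OF x y this]
  have nz2: "orbit_num2 \<noteq> 0" and nz3: "orbit_num3 \<noteq> 0" and nz4: "orbit_num4 \<noteq> 0"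
    and nz5: "orbit_num5 \<noteq> 0" and nz6: "orbit_num6 \<noteq> 0"
    using w_nz closed by simp_all
  note closing = orbit_num_closing[OF s a]
  have w7: "w 7 = orbit_num7 / orbit_num4"
    by (rule quotient_recursion_step[OF r(1) w_nz(4) closed(4,5), where G = "orbit_num3 * orbit_num5"];
        (simp add: nz2 nz3 nz4 nz5 algebra_simps; fail)?; use closing(1) in algebra)
  then have nz7: "orbit_num7 \<noteq> 0" using w_nz(6) by simp
  have w8: "w 8 = x / 1"
    by (rule quotient_recursion_step[OF r(2) w_nz(5) closed(5) w7, where G = "orbit_num4 * orbit_num6"];
        (simp add: nz3 nz4 nz6 algebra_simps; fail)?; use closing(2) in algebra)
  have "w 9 = y / 1"
    by (rule quotient_recursion_step[OF r(3) w_nz(6) w7 w8, where G = orbit_num7];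
        (simp add: nz4 nz7; fail)?; use closing(3) in algebra)
  with w8 show ?thesis by simp
qed

end

lemma rec_seq_iff_product:
  "rec_seq a2 a0 z \<longleftrightarrow> (\<forall>n\<ge>1. z n \<noteq> 0 \<and> z (n + 2) * z n = a2 * z n + z (n + 1) + a0)"
  by (auto simp: rec_seq_def eq_divide_eq)

lemma rec_seq_constant_solution:
  fixes a2 a0 :: complex
  assumes "a0 \<noteq> 0"
  shows "\<exists>c. rec_seq a2 a0 (\<lambda>_. c)"
proof -
  define b where "b = 1 + a2"
  obtain r where r: "r\<^sup>2 = b\<^sup>2 + 4 * a0" using power2_csqrt by blast
  define c where "c = (b + r) / 2"
  have "c * c = b * c + a0"
    using r unfolding c_def by (simp add: field_simps power2_eq_square)
  moreover from this have "c \<noteq> 0" using assms by auto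
  ultimately have "rec_seq a2 a0 (\<lambda>_. c)"
    by (simp add: rec_seq_iff_product b_def algebra_simps)
  then show ?thesis ..
qed

theorem mainTheorem1:
  fixes a2 a0 :: complex
  assumes "(a2 = \<i> \<and> a0 = (1 - \<i>) / 2) \<or> (a2 = - \<i> \<and> a0 = (1 + \<i>) / 2)"
  shows "(\<exists>z. rec_seq a2 a0 z) \<and>
         (\<forall>z. rec_seq a2 a0 z \<longrightarrow> (\<forall>n\<ge>1. z (n + 8) = z n))"
proof -
  have s: "a2 * a2 = -1" and a: "2 * a0 = 1 - a2" using assms by (auto simp: field_simps)
  have "a0 \<noteq> 0" using s a by auto
  have "z (n + 8) = z n" if "rec_seq a2 a0 z" and "n \<ge> 1" for z n
  proof -
    have "z (n + k) \<noteq> 0 \<and> z (n + k + 2) * z (n + k) = a2 * z (n + k) + z (n + k + 1) + a0" for k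
      using \<open>rec_seq a2 a0 z\<close> \<open>n \<ge> 1\<close> by (simp add: rec_seq_iff_product)
    then show ?thesis
      using product_recursion_period_8[OF s a, of "\<lambda>k. z (n + k)"] by (simp add: add.assoc)
  qed
  then show ?thesis using rec_seq_constant_solution[OF \<open>a0 \<noteq> 0\<close>] by blast
qed

end
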